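(* Let $n>1$, $q\geqslant 0$ and $m_0,\dots,m_{q-1}>1$ be natural numbers, and let $t,s_0,\dots,s_{q-1},u,v$ be variables distinct from $x$. Then the theory ${\sf TQ}$ proves that each of the formulas $\exists x\,[\Re_n(x\cdot t)\wedge \bigwedge_{j<q}\neg\Re_{m_j}(x\cdot s_j)]$, $\exists x\,[u<x\wedge \Re_n(x\cdot t)\wedge \bigwedge_{j<q}\neg\Re_{m_j}(x\cdot s_j)]$, $\exists x\,[x<v\wedge \Re_n(x\cdot t)\wedge \bigwedge_{j<q}\neg\Re_{m_j}(x\cdot s_j)]$ is equivalent to $\bigwedge_{j<q,\ m_j\mid n}\neg\Re_{m_j}(t^{-1}\cdot s_j)$, and that the formula $\exists x\,[u<x\wedge x<v\wedge \Re_n(x\cdot t)\wedge \bigwedge_{j<q}\neg\Re_{m_j}(x\cdot s_j)]$ is equivalent to $\bigwedge_{j<q,\ m_j\mid n}\neg\Re_{m_j}(t^{-1}\cdot s_j)\wedge u<v$. (Here $\bigwedge_{j<q,\,m_j\mid n}$ ranges over those $j<q$ with $m_j$ dividing $n$; an empty conjunction is the true formula.)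
   Context: Language $\{<,\times,\square^{-1},\mathbf{1}\}$; $y^n$ abbreviates $y\cdots y$ ($n$ times); for $n\geqslant 1$, $\Re_n(y)$ abbreviates the formula $\exists x\,(y=x^n)$. ${\sf TQ}$ is the theory axiomatized by: ($\texttt{O}_1$) $\forall x,y(x<y\rightarrow\neg(y<x))$; ($\texttt{O}_2$) $\forall x,y,z(x<y\wedge y<z\rightarrow x<z)$; ($\texttt{O}_3$) $\forall x,y(x<y\vee x=y\vee y<x)$; ($\texttt{M}_1$) $\forall x,y,z(x\cdot(y\cdot z)=(x\cdot y)\cdot z)$; ($\texttt{M}_2$) $\forall x(x\cdot\mathbf{1}=x)$; ($\texttt{M}_3$) $\forall x(x\cdot x^{-1}=\mathbf{1})$; ($\texttt{M}_4$) $\forall x,y(x\cdot y=y\cdot x)$; ($\texttt{M}_5$) $\forall x,y,z(x<y\rightarrow x\cdot z<y\cdot z)$; ($\texttt{M}_6$) $\exists y(y\neq\mathbf{1})$; ($\texttt{M}_{10}$) for each $n\geqslant1$: $\forall x,z\exists y(x<z\rightarrow x<y^n\wedge y^n<z)$; ($\texttt{M}_{11}$) for each $n\geqslant 1$, each $q\geqslant1$ and all natural numbers $m_0,\dots,m_{q-1}>1$: $\forall x_0,\dots,x_{q-1}\exists y\forall z\bigwedge_{j<q,\ m_j\nmid n}(y^n\cdot x_j\neq z^{m_j})$, the conjunction ranging over those $j<q$ for which $m_j$ does not divide $n$. *)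

theory Defs
  imports Main
begin

text \<open>y^n = y * ... * y (n times), meaningful for n >= 1; the value at n = 0 is junk
  and never used.\<close>
fun mpow :: "('a \<Rightarrow> 'a \<Rightarrow> 'a) \<Rightarrow> 'a \<Rightarrow> nat \<Rightarrow> 'a" where
  "mpow mul y 0 = y"
| "mpow mul y (Suc 0) = y"
| "mpow mul y (Suc (Suc k)) = mul (mpow mul y (Suc k)) y"

definition Re :: "('a \<Rightarrow> 'a \<Rightarrow> 'a) \<Rightarrow> nat \<Rightarrow> 'a \<Rightarrow> bool" where
  "Re mul n y \<longleftrightarrow> (\<exists>x. y = mpow mul x n)"

definition TQ_model :: "('a \<Rightarrow> 'a \<Rightarrow> bool) \<Rightarrow> ('a \<Rightarrow> 'a \<Rightarrow> 'a) \<Rightarrow> ('a \<Rightarrow> 'a) \<Rightarrow> 'a \<Rightarrow> bool" where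
  "TQ_model lt mul iv e \<longleftrightarrow>
     (\<forall>x y. lt x y \<longrightarrow> \<not> lt y x) \<and>
     (\<forall>x y z. lt x y \<and> lt y z \<longrightarrow> lt x z) \<and>
     (\<forall>x y. lt x y \<or> x = y \<or> lt y x) \<and>
     (\<forall>x y z. mul x (mul y z) = mul (mul x y) z) \<and>
     (\<forall>x. mul x e = x) \<and>
     (\<forall>x. mul x (iv x) = e) \<and>
     (\<forall>x y. mul x y = mul y x) \<and>
     (\<forall>x y z. lt x y \<longrightarrow> lt (mul x z) (mul y z)) \<and>
     (\<exists>y. y \<noteq> e) \<and>
     (\<forall>n::nat. n \<ge> 1 \<longrightarrow> (\<forall>x z. \<exists>y. lt x z \<longrightarrow> lt x (mpow mul y n) \<and> lt (mpow mul y n) z)) \<and>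
     (\<forall>n::nat. \<forall>q::nat. \<forall>m::nat \<Rightarrow> nat. n \<ge> 1 \<longrightarrow> q \<ge> 1 \<longrightarrow> (\<forall>j<q. m j > 1) \<longrightarrow>
        (\<forall>xs::nat \<Rightarrow> 'a. \<exists>y. \<forall>z. \<forall>j<q. \<not> m j dvd n \<longrightarrow> mul (mpow mul y n) (xs j) \<noteq> mpow mul z (m j)))"

end

theory Submission
  imports Defs "HOL-Algebra.Group"
begin

(* Write a_j = t^-1 s_j. If x t is an n-th power and m_j divides n, then x t is also an
   m_j-th power, so x s_j = (x t) a_j is an m_j-th power iff a_j is; this gives the necessity
   of the condition, and settles the indices with m_j | n for every such x.
   Conversely, axiom M11 yields y such that y^n a_j is not an m_j-th power whenever m_j does not
   divide n, and M10 yields w with w^(M n) in any prescribed interval, where M = prod_j m_j.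
   For x = (y w^M)^n t^-1 the element x t is an n-th power, and x s_j differs from y^n a_j by
   the m_j-th power w^(M n), so it is not an m_j-th power when m_j does not divide n. Since x is
   w^(M n) times a fixed element, it can be placed in any interval; the one-sided cases use
   that the order has no endpoints. *)

definition is_nth_power :: "('a, 'b) monoid_scheme \<Rightarrow> nat \<Rightarrow> 'a \<Rightarrow> bool" where
  "is_nth_power G k a \<longleftrightarrow> (\<exists>x\<in>carrier G. a = x [^]\<^bsub>G\<^esub> k)"

lemma (in monoid) is_nth_power_pow_dvd:
  assumes "x \<in> carrier G" and "m dvd n"
  shows "is_nth_power G m (x [^] n)"
proof -
  obtain k where "n = m * k" using \<open>m dvd n\<close> by blast
  then have "x [^] n = (x [^] k) [^] m" using assms(1) by (simp add: nat_pow_pow mult.commute)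
  then show ?thesis using assms(1) unfolding is_nth_power_def by blast
qed

lemma (in comm_group) is_nth_power_mult_cancel:
  assumes a: "a \<in> carrier G" and b: "b \<in> carrier G" and "is_nth_power G k b"
  shows "is_nth_power G k (a \<otimes> b) \<longleftrightarrow> is_nth_power G k a"
proof -
  obtain y where y: "y \<in> carrier G" "b = y [^] k"
    using \<open>is_nth_power G k b\<close> unfolding is_nth_power_def by blast
  show ?thesis
  proof
    assume "is_nth_power G k (a \<otimes> b)"
    then obtain z where z: "z \<in> carrier G" "a \<otimes> b = z [^] k"
      unfolding is_nth_power_def by blast
    have "a = (a \<otimes> b) \<otimes> inv b" using a b by (simp add: m_assoc)
    also have "\<dots> = (z \<otimes> inv y) [^] k" using y z by (simp add: nat_pow_distrib nat_pow_inv)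
    finally show "is_nth_power G k a" using y z unfolding is_nth_power_def by blast
  next
    assume "is_nth_power G k a"
    then obtain x where x: "x \<in> carrier G" "a = x [^] k"
      unfolding is_nth_power_def by blast
    then have "a \<otimes> b = (x \<otimes> y) [^] k" using y by (simp add: nat_pow_distrib)
    then show "is_nth_power G k (a \<otimes> b)" using x y unfolding is_nth_power_def by blast
  qed
qed

locale tq_model =
  fixes lt :: "'a \<Rightarrow> 'a \<Rightarrow> bool" and mul :: "'a \<Rightarrow> 'a \<Rightarrow> 'a" and iv :: "'a \<Rightarrow> 'a" and e :: 'a
  assumes TQ: "TQ_model lt mul iv e"
begin

abbreviation G :: "'a monoid" where
  "G \<equiv> \<lparr>carrier = UNIV, mult = mul, one = e\<rparr>"

lemma lt_trans: "lt x y \<Longrightarrow> lt y z \<Longrightarrow> lt x z"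
  using TQ unfolding TQ_model_def by (elim conjE) blast

lemma lt_total: "lt x y \<or> x = y \<or> lt y x"
  using TQ unfolding TQ_model_def by (elim conjE) blast

lemma lt_mul_right: "lt x y \<Longrightarrow> lt (mul x z) (mul y z)"
  using TQ unfolding TQ_model_def by (elim conjE) blast

lemma mul_assoc: "mul (mul x y) z = mul x (mul y z)"
  using TQ unfolding TQ_model_def by (elim conjE) (rule sym, blast)

lemma mul_commute: "mul x y = mul y x"
  using TQ unfolding TQ_model_def by (elim conjE) blast

lemma mul_e: "mul x e = x"
  using TQ unfolding TQ_model_def by (elim conjE) blast

lemma mul_iv: "mul x (iv x) = e"
  using TQ unfolding TQ_model_def by (elim conjE) blast

sublocale G: comm_group G
proof (rule comm_groupI)
  show "x \<otimes>\<^bsub>G\<^esub> y = y \<otimes>\<^bsub>G\<^esub> x" for x y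
    by (simp add: mul_commute)
  show "\<exists>y\<in>carrier G. y \<otimes>\<^bsub>G\<^esub> x = \<one>\<^bsub>G\<^esub>" for x
    by (rule bexI[of _ "iv x"]) (simp_all add: mul_commute[of "iv x"] mul_iv)
qed (simp_all add: mul_assoc mul_e mul_commute[of e])

lemma mul_left_commute: "mul x (mul y z) = mul y (mul x z)"
  by (metis mul_assoc mul_commute)

lemmas mul_ac = mul_assoc mul_commute mul_left_commute

lemma mul_iv_mul [simp]: "mul (mul x (iv y)) y = x"
  by (metis mul_assoc mul_commute mul_e mul_iv)

lemma mul_mul_iv [simp]: "mul (mul x y) (iv y) = x"
  by (metis mul_assoc mul_e mul_iv)

lemma lt_mul_right_cancel: "lt (mul x z) (mul y z) \<Longrightarrow> lt x y"
  using lt_mul_right[of "mul x z" "mul y z" "iv z"] by (simp add: mul_assoc mul_iv mul_e)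

lemma pow_mul_distrib: "mul x y [^]\<^bsub>G\<^esub> (k::nat) = mul (x [^]\<^bsub>G\<^esub> k) (y [^]\<^bsub>G\<^esub> k)"
  using G.nat_pow_distrib[of x y k] by simp

lemma mpow_eq_nat_pow:
  assumes "k \<ge> 1"
  shows "mpow mul y k = y [^]\<^bsub>G\<^esub> k"
proof -
  have "mpow mul y (Suc i) = y [^]\<^bsub>G\<^esub> Suc i" for i
    by (induction i) (simp_all add: mul_commute[of e] mul_e)
  then show ?thesis using assms by (cases k) auto
qed

lemma Re_iff_is_nth_power: "k \<ge> 1 \<Longrightarrow> Re mul k z \<longleftrightarrow> is_nth_power G k z"
  by (simp add: Re_def is_nth_power_def mpow_eq_nat_pow)

lemma exists_pow_between:
  fixes k :: nat
  assumes "k \<ge> 1" and "lt x z"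
  shows "\<exists>w. lt x (w [^]\<^bsub>G\<^esub> k) \<and> lt (w [^]\<^bsub>G\<^esub> k) z"
proof -
  have "\<forall>n\<ge>1. \<forall>x z. \<exists>y. lt x z \<longrightarrow> lt x (mpow mul y n) \<and> lt (mpow mul y n) z"
    using TQ unfolding TQ_model_def by (elim conjE) assumption
  then obtain y where "lt x (mpow mul y k)" and "lt (mpow mul y k) z"
    using assms by blast
  then show ?thesis using assms(1) by (auto simp: mpow_eq_nat_pow)
qed

lemma exists_pow_shift_not_nth_power:
  fixes q :: nat and a :: "nat \<Rightarrow> 'a"
  assumes n: "n \<ge> 1" and m: "\<forall>j<q. m j > 1"
  shows "\<exists>y. \<forall>j<q. \<not> m j dvd n \<longrightarrow> \<not> is_nth_power G (m j) (mul (y [^]\<^bsub>G\<^esub> n) (a j))"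
proof (cases "q = 0")
  case False
  then have "q \<ge> 1" by simp
  have "\<forall>n::nat. \<forall>q::nat. \<forall>m::nat \<Rightarrow> nat. n \<ge> 1 \<longrightarrow> q \<ge> 1 \<longrightarrow> (\<forall>j<q. m j > 1) \<longrightarrow>
        (\<forall>xs::nat \<Rightarrow> 'a. \<exists>y. \<forall>z. \<forall>j<q. \<not> m j dvd n \<longrightarrow> mul (mpow mul y n) (xs j) \<noteq> mpow mul z (m j))"
    using TQ unfolding TQ_model_def by (elim conjE) assumption
  then obtain y where y: "\<forall>z. \<forall>j<q. \<not> m j dvd n \<longrightarrow> mul (mpow mul y n) (a j) \<noteq> mpow mul z (m j)"
    using n m \<open>q \<ge> 1\<close> by metis
  have "\<not> is_nth_power G (m j) (mul (y [^]\<^bsub>G\<^esub> n) (a j))" if "j < q" and "\<not> m j dvd n" for j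
  proof -
    have "\<not> Re mul (m j) (mul (mpow mul y n) (a j))"
      using y that unfolding Re_def by blast
    moreover have "m j \<ge> 1" using m \<open>j < q\<close> by force
    ultimately show ?thesis using n by (simp add: Re_iff_is_nth_power mpow_eq_nat_pow)
  qed
  then show ?thesis by blast
qed simp

lemma exists_gt_e: "\<exists>g. lt e g"
proof -
  obtain g where "g \<noteq> e"
    using TQ unfolding TQ_model_def by (elim conjE) blast
  then consider "lt e g" | "lt g e" using lt_total by blast
  then show ?thesis
  proof cases
    case 2
    from lt_mul_right[OF this, of "iv g"] show ?thesis
      by (auto simp: mul_iv mul_commute[of e] mul_e)
  qed blast
qed

lemma exists_gt: "\<exists>h. lt u h"
proof -
  obtain g where "lt e g" using exists_gt_e by blast
  from lt_mul_right[OF this, of u] show ?thesis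
    by (auto simp: mul_commute[of e] mul_e)
qed

lemma exists_lt: "\<exists>l. lt l v"
proof -
  obtain g where "lt e g" using exists_gt_e by blast
  moreover have "mul g (mul v (iv g)) = v"
    by (metis mul_assoc mul_commute mul_e mul_iv)
  ultimately show ?thesis
    using lt_mul_right[of e g "mul v (iv g)"] by (auto simp: mul_commute[of e] mul_e)
qed

lemma Re_mul_iff_of_dvd:
  assumes "m \<ge> 1" and "m dvd n" and "n \<ge> 1" and "Re mul n (mul x t)"
  shows "Re mul m (mul x s) \<longleftrightarrow> Re mul m (mul (iv t) s)"
proof -
  obtain y where "mul x t = y [^]\<^bsub>G\<^esub> n"
    using assms(3,4) by (auto simp: Re_iff_is_nth_power is_nth_power_def)
  then have "is_nth_power G m (mul x t)"
    using G.is_nth_power_pow_dvd[of y m n] assms(2) by simp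
  moreover have "mul x s = mul (mul (iv t) s) (mul x t)"
    by (metis mul_assoc mul_commute mul_e mul_iv)
  ultimately show ?thesis
    using G.is_nth_power_mult_cancel[of "mul (iv t) s" "mul x t" m] assms(1)
    by (simp add: Re_iff_is_nth_power)
qed

lemma exists_solution_between:
  fixes q :: nat
  assumes n: "n \<ge> 1" and m: "\<forall>j<q. m j > 1"
    and cond: "\<forall>j<q. m j dvd n \<longrightarrow> \<not> Re mul (m j) (mul (iv t) (s j))"
    and "lt lo hi"
  shows "\<exists>x. lt lo x \<and> lt x hi \<and> Re mul n (mul x t) \<and> (\<forall>j<q. \<not> Re mul (m j) (mul x (s j)))"
proof -
  define a where "a j = mul (iv t) (s j)" for j
  obtain y where y: "\<And>j. j < q \<Longrightarrow> \<not> m j dvd n \<Longrightarrow> \<not> is_nth_power G (m j) (mul (y [^]\<^bsub>G\<^esub> n) (a j))"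
    using exists_pow_shift_not_nth_power[OF n m] by blast
  define M where "M = (\<Prod>j<q. m j)"
  have "M \<ge> 1" using m unfolding M_def by (auto simp: Suc_le_eq intro!: prod_pos)
  define c where "c = mul t (iv (y [^]\<^bsub>G\<^esub> n))"
  obtain w where w: "lt (mul lo c) (w [^]\<^bsub>G\<^esub> (M * n))" "lt (w [^]\<^bsub>G\<^esub> (M * n)) (mul hi c)"
    using exists_pow_between[of "M * n"] lt_mul_right[OF \<open>lt lo hi\<close>] \<open>M \<ge> 1\<close> n by force
  define b where "b = mul y (w [^]\<^bsub>G\<^esub> M)"
  define x where "x = mul (b [^]\<^bsub>G\<^esub> n) (iv t)"
  have b_pow: "b [^]\<^bsub>G\<^esub> n = mul (y [^]\<^bsub>G\<^esub> n) (w [^]\<^bsub>G\<^esub> (M * n))"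
    unfolding b_def by (simp add: pow_mul_distrib G.nat_pow_pow)
  have "mul x c = mul (mul (mul (mul (w [^]\<^bsub>G\<^esub> (M * n)) (y [^]\<^bsub>G\<^esub> n)) (iv (y [^]\<^bsub>G\<^esub> n))) (iv t)) t"
    unfolding x_def c_def b_pow by (simp only: mul_ac)
  then have xc: "mul x c = w [^]\<^bsub>G\<^esub> (M * n)" by simp
  have "lt lo x" using lt_mul_right_cancel[of lo c x] w(1) xc by simp
  moreover have "lt x hi" using lt_mul_right_cancel[of x c hi] w(2) xc by simp
  moreover have Re_xt: "Re mul n (mul x t)"
    using n by (auto simp: x_def Re_iff_is_nth_power is_nth_power_def)
  moreover have "\<not> Re mul (m j) (mul x (s j))" if "j < q" for j
  proof -
    have mj: "m j \<ge> 1" using m that by force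
    show ?thesis
    proof (cases "m j dvd n")
      case True
      then show ?thesis
        using Re_mul_iff_of_dvd[OF mj True n Re_xt] cond that by blast
    next
      case False
      have "mul x (s j) = mul (mul (y [^]\<^bsub>G\<^esub> n) (a j)) (w [^]\<^bsub>G\<^esub> (M * n))"
        unfolding x_def b_pow a_def by (simp only: mul_ac)
      moreover have "m j dvd M * n"
        using that unfolding M_def by (simp add: dvd_prodI)
      ultimately have "is_nth_power G (m j) (mul x (s j)) \<longleftrightarrow>
          is_nth_power G (m j) (mul (y [^]\<^bsub>G\<^esub> n) (a j))"
        using G.is_nth_power_mult_cancel G.is_nth_power_pow_dvd by simp
      then show ?thesis
        using y[OF that False] by (simp add: Re_iff_is_nth_power[OF mj])
    qed
  qed
  ultimately show ?thesis by blast
qed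

end

theorem lemma5:
  fixes lt :: "'a \<Rightarrow> 'a \<Rightarrow> bool" and mul :: "'a \<Rightarrow> 'a \<Rightarrow> 'a" and iv :: "'a \<Rightarrow> 'a" and e :: 'a
    and n q :: nat and m :: "nat \<Rightarrow> nat" and t u v :: 'a and s :: "nat \<Rightarrow> 'a"
  assumes "TQ_model lt mul iv e"
    and "n > 1"
    and "\<forall>j<q. m j > 1"
  shows "((\<exists>x. Re mul n (mul x t) \<and> (\<forall>j<q. \<not> Re mul (m j) (mul x (s j))))
            \<longleftrightarrow> (\<forall>j<q. m j dvd n \<longrightarrow> \<not> Re mul (m j) (mul (iv t) (s j))))
       \<and> ((\<exists>x. lt u x \<and> Re mul n (mul x t) \<and> (\<forall>j<q. \<not> Re mul (m j) (mul x (s j))))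
            \<longleftrightarrow> (\<forall>j<q. m j dvd n \<longrightarrow> \<not> Re mul (m j) (mul (iv t) (s j))))
       \<and> ((\<exists>x. lt x v \<and> Re mul n (mul x t) \<and> (\<forall>j<q. \<not> Re mul (m j) (mul x (s j))))
            \<longleftrightarrow> (\<forall>j<q. m j dvd n \<longrightarrow> \<not> Re mul (m j) (mul (iv t) (s j))))
       \<and> ((\<exists>x. lt u x \<and> lt x v \<and> Re mul n (mul x t) \<and> (\<forall>j<q. \<not> Re mul (m j) (mul x (s j))))
            \<longleftrightarrow> (\<forall>j<q. m j dvd n \<longrightarrow> \<not> Re mul (m j) (mul (iv t) (s j))) \<and> lt u v)"
proof -
  interpret tq_model lt mul iv e by unfold_locales (fact assms(1))
  have n: "n \<ge> 1" using assms(2) by simp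
  define P where "P \<longleftrightarrow> (\<forall>j<q. m j dvd n \<longrightarrow> \<not> Re mul (m j) (mul (iv t) (s j)))"
  define S where "S x \<longleftrightarrow> Re mul n (mul x t) \<and> (\<forall>j<q. \<not> Re mul (m j) (mul x (s j)))" for x
  have necessary: "P" if "S x" for x
    unfolding P_def
  proof (intro allI impI)
    fix j assume "j < q" and "m j dvd n"
    moreover have "m j \<ge> 1" using assms(3) \<open>j < q\<close> by force
    ultimately show "\<not> Re mul (m j) (mul (iv t) (s j))"
      using Re_mul_iff_of_dvd[OF _ _ n] that unfolding S_def by blast
  qed
  have sufficient: "\<exists>x. lt lo x \<and> lt x hi \<and> S x" if "P" and "lt lo hi" for lo hi
    using exists_solution_between[OF n assms(3)] that unfolding P_def S_def by blast
  obtain h where "lt u h" using exists_gt by blast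
  obtain l where "lt l v" using exists_lt by blast
  have "(\<exists>x. S x) \<longleftrightarrow> P" and "(\<exists>x. lt u x \<and> S x) \<longleftrightarrow> P" and "(\<exists>x. lt x v \<and> S x) \<longleftrightarrow> P"
    and "(\<exists>x. lt u x \<and> lt x v \<and> S x) \<longleftrightarrow> P \<and> lt u v"
    using necessary sufficient \<open>lt u h\<close> \<open>lt l v\<close> lt_trans by blast+
  then show ?thesis unfolding S_def P_def by blast
qed

end
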